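(* Let $(b,c)$ be a weighted graph over $V$ with $n(x)>0$ for all $x\in V$, let $m$ be a measure on $V$, and let $U\subseteq V$ be nonempty. Then for all $u\in D(Q_U)$ $$d_U\Big(1-\sqrt{1-\alpha_{b,c,n}(U)^2}\Big)\|u\|_m^2\le Q_U(u)\le D_U\Big(1+\sqrt{1-\alpha_{b,c,n}(U)^2}\Big)\|u\|_m^2 .$$ If moreover $D_U<\infty$, then for all $u\in D(Q_U)$ $$\Big(D_U-\sqrt{D_U^2-\alpha_{b,c,m}(U)^2}\Big)\|u\|_m^2\le Q_U(u)\le\Big(D_U+\sqrt{D_U^2-\alpha_{b,c,m}(U)^2}\Big)\|u\|_m^2 .$$
   Context: Let $V$ be a countably infinite set. A weighted graph over $V$ is a pair $(b,c)$ of maps $b:V\times V\to[0,\infty)$ and $c:V\to[0,\infty)$ with $b(x,x)=0$, $b(x,y)=b(y,x)$ and $\sum_{y\in V}b(x,y)<\infty$ for all $x,y\in V$. A measure on $V$ is a map $m:V\to(0,\infty)$, and $\|u\|_m^2=\sum_x m(x)u(x)^2$. Define $Q^{\max}(u)=\frac12\sum_{x,y}b(x,y)(u(x)-u(y))^2+\sum_x c(x)u(x)^2$; $Q=Q_{b,c,m}$ is the closure in $\ell^2(V,m)$ of the restriction of $Q^{\max}$ to finitely supported functions. For $U\subseteq V$, $Q_U$ is the closure of the restriction of $Q$ to finitely supported functions with support in $U$ (a form on $\ell^2(U,m)$), and $L_U$ its associated selfadjoint operator. Let $n(x)=\sum_y b(x,y)+c(x)$ (when $n>0$ it is itself a measure),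 $d(x)=n(x)/m(x)$, $d_U=\inf_{x\in U}d(x)$, $D_U=\sup_{x\in U}d(x)$. For finite $W$ let $|\partial W|=\sum_{x\in W,y\notin W}b(x,y)+\sum_{x\in W}c(x)$, and for a measure $\mu$ on $V$ set $\alpha_{b,c,\mu}(U)=\inf\{|\partial W|/\mu(W):\ W\subseteq U\text{ finite, nonempty}\}$, $\mu(W)=\sum_{x\in W}\mu(x)$. *)

theory Defs
  imports "HOL-Analysis.Analysis"
begin

text \<open>Vertex set V is a countably infinite type 'v. Functions on V are 'v => real;
  functions in l2(U,m) are represented as functions on V vanishing outside U.\<close>

definition weighted_graph :: "('v \<Rightarrow> 'v \<Rightarrow> real) \<Rightarrow> ('v \<Rightarrow> real) \<Rightarrow> bool" where
  "weighted_graph b c \<longleftrightarrow>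
     (\<forall>x y. b x y \<ge> 0) \<and> (\<forall>x. c x \<ge> 0) \<and> (\<forall>x. b x x = 0) \<and>
     (\<forall>x y. b x y = b y x) \<and> (\<forall>x. (\<lambda>y. b x y) summable_on UNIV)"

definition measure_on :: "('v \<Rightarrow> real) \<Rightarrow> bool" where
  "measure_on m \<longleftrightarrow> (\<forall>x. m x > 0)"

definition normsq :: "('v \<Rightarrow> real) \<Rightarrow> ('v \<Rightarrow> real) \<Rightarrow> real" where
  "normsq m u = (\<Sum>\<^sub>\<infinity>x. m x * (u x)\<^sup>2)"

definition Qmax :: "('v \<Rightarrow> 'v \<Rightarrow> real) \<Rightarrow> ('v \<Rightarrow> real) \<Rightarrow> ('v \<Rightarrow> real) \<Rightarrow> real" where
  "Qmax b c u = (\<Sum>\<^sub>\<infinity>p. b (fst p) (snd p) * (u (fst p) - u (snd p))\<^sup>2) / 2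
                + (\<Sum>\<^sub>\<infinity>x. c x * (u x)\<^sup>2)"

definition fin_supp_in :: "'v set \<Rightarrow> ('v \<Rightarrow> real) \<Rightarrow> bool" where
  "fin_supp_in U \<phi> \<longleftrightarrow> finite {x. \<phi> x \<noteq> 0} \<and> {x. \<phi> x \<noteq> 0} \<subseteq> U"

definition approx_seq :: "('v \<Rightarrow> 'v \<Rightarrow> real) \<Rightarrow> ('v \<Rightarrow> real) \<Rightarrow> ('v \<Rightarrow> real) \<Rightarrow> 'v set
     \<Rightarrow> ('v \<Rightarrow> real) \<Rightarrow> (nat \<Rightarrow> 'v \<Rightarrow> real) \<Rightarrow> bool" where
  "approx_seq b c m U u \<phi> \<longleftrightarrow>
     (\<forall>k. fin_supp_in U (\<phi> k)) \<and>
     (\<lambda>k. normsq m (\<lambda>x. \<phi> k x - u x)) \<longlonglongrightarrow> 0 \<and>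
     (\<forall>\<epsilon>>0. \<exists>N. \<forall>k\<ge>N. \<forall>l\<ge>N. Qmax b c (\<lambda>x. \<phi> k x - \<phi> l x) < \<epsilon>)"

definition QU_dom :: "('v \<Rightarrow> 'v \<Rightarrow> real) \<Rightarrow> ('v \<Rightarrow> real) \<Rightarrow> ('v \<Rightarrow> real) \<Rightarrow> 'v set
     \<Rightarrow> ('v \<Rightarrow> real) set" where
  "QU_dom b c m U = {u. (\<forall>x. x \<notin> U \<longrightarrow> u x = 0) \<and> (\<lambda>x. m x * (u x)\<^sup>2) summable_on UNIV \<and>
                        (\<exists>\<phi>. approx_seq b c m U u \<phi>)}"

definition QU :: "('v \<Rightarrow> 'v \<Rightarrow> real) \<Rightarrow> ('v \<Rightarrow> real) \<Rightarrow> ('v \<Rightarrow> real) \<Rightarrow> 'v set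
     \<Rightarrow> ('v \<Rightarrow> real) \<Rightarrow> real" where
  "QU b c m U u = lim (\<lambda>k. Qmax b c ((SOME \<phi>. approx_seq b c m U u \<phi>) k))"

definition nmeas :: "('v \<Rightarrow> 'v \<Rightarrow> real) \<Rightarrow> ('v \<Rightarrow> real) \<Rightarrow> 'v \<Rightarrow> real" where
  "nmeas b c x = (\<Sum>\<^sub>\<infinity>y. b x y) + c x"

definition deg :: "('v \<Rightarrow> 'v \<Rightarrow> real) \<Rightarrow> ('v \<Rightarrow> real) \<Rightarrow> ('v \<Rightarrow> real) \<Rightarrow> 'v \<Rightarrow> real" where
  "deg b c m x = nmeas b c x / m x"

definition boundary :: "('v \<Rightarrow> 'v \<Rightarrow> real) \<Rightarrow> ('v \<Rightarrow> real) \<Rightarrow> 'v set \<Rightarrow> real" where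
  "boundary b c W = (\<Sum>x\<in>W. \<Sum>\<^sub>\<infinity>y\<in>- W. b x y) + (\<Sum>x\<in>W. c x)"

definition alpha :: "('v \<Rightarrow> 'v \<Rightarrow> real) \<Rightarrow> ('v \<Rightarrow> real) \<Rightarrow> ('v \<Rightarrow> real) \<Rightarrow> 'v set \<Rightarrow> real" where
  "alpha b c \<mu> U = Inf {boundary b c W / (\<Sum>x\<in>W. \<mu> x) | W. W \<subseteq> U \<and> finite W \<and> W \<noteq> {}}"

end

theory Submission
  imports Defs
begin

(* For a finitely supported phi with support S \<subseteq> U write
     A  = \<Sum>\<Sum> b(x,y) (phi x - phi y)^2,    Bp = \<Sum>\<Sum> b(x,y) (phi x + phi y)^2   (x,y \<in> S),
     R  = \<Sum>_S (exit weight of x from S + c x) phi(x)^2,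
   so that Q(phi) = A/2 + R, and, with N = \<parallel>phi\<parallel>^2 in l^2(n), 2N - Q(phi) = Bp/2 + R.
   A co-area (layer cake) argument bounds alpha_mu(U) \<parallel>phi\<parallel>^2_mu by
   N - \<Sum>\<Sum> b min(phi x^2, phi y^2), and the AM-GM inequality bounds the latter by
   sqrt (Q (2N - Q)).  This yields the key inequality
     (alpha_mu(U) \<parallel>phi\<parallel>_mu^2)^2 \<le> Q(phi) (2 \<parallel>phi\<parallel>_n^2 - Q(phi)),
   a quadratic inequality in Q(phi) that gives both pairs of bounds for finitely supported
   functions (with mu = n, resp. mu = m together with n \<le> D_U m).
   Finally the bounds pass to the closure: along an approximating sequence both Q and the
   norm converge (triangle inequalities for sqrt Q and for the norm), and the form is
   closable, which settles the degenerate case 0 * \<infinity> of the extended-real upper bound. *)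

lemma two_abs_mult_le:
  fixes u v l :: real
  assumes "l > 0"
  shows "2 * \<bar>u * v\<bar> \<le> l * u\<^sup>2 + v\<^sup>2 / l"
proof -
  have "0 \<le> (l * \<bar>u\<bar> - \<bar>v\<bar>)\<^sup>2" by simp
  also have "(l * \<bar>u\<bar> - \<bar>v\<bar>)\<^sup>2 = l * (l * u\<^sup>2 + v\<^sup>2 / l) - l * (2 * \<bar>u * v\<bar>)"
    using assms by (simp add: power2_eq_square algebra_simps abs_mult)
  finally have "l * (2 * \<bar>u * v\<bar>) \<le> l * (l * u\<^sup>2 + v\<^sup>2 / l)" by simp
  then show ?thesis using assms by simp
qed

text \<open>Optimizing the AM-GM bound over the scaling parameter: if Y \<le> l A + B / l for every
  l > 0, then Y \<le> 2 sqrt (A B).  This replaces every use of the Cauchy-Schwarz inequality.\<close>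
lemma le_two_sqrt_mult:
  fixes A B Y :: real
  assumes A: "A \<ge> 0" and B: "B \<ge> 0" and H: "\<And>l. l > 0 \<Longrightarrow> Y \<le> l * A + B / l"
  shows "Y \<le> 2 * sqrt (A * B)"
proof (cases "A > 0 \<and> B > 0")
  case True
  define l where "l = sqrt B / sqrt A"
  have l: "l > 0" using True by (simp add: l_def)
  have "l * A = sqrt B * (A / sqrt A)" "B / l = sqrt A * (B / sqrt B)"
    unfolding l_def by simp_all
  then have "l * A = sqrt A * sqrt B" "B / l = sqrt A * sqrt B"
    using A B by (simp_all add: real_div_sqrt mult.commute)
  then have "Y \<le> sqrt A * sqrt B + sqrt A * sqrt B" using H[OF l] by simp
  then show ?thesis by (simp add: real_sqrt_mult)
next
  case False
  have "Y \<le> 0"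
  proof (rule ccontr)
    assume "\<not> Y \<le> 0"
    then have Y: "Y > 0" by simp
    consider "A = 0" | "B = 0" using False A B by linarith
    then show False
    proof cases
      case 1
      have "Y \<le> B / (2 * (B + 1) / Y)" using H[of "2 * (B + 1) / Y"] 1 Y B by simp
      also have "\<dots> = Y * (B / (2 * (B + 1)))" using Y by simp
      also have "\<dots> < Y * 1" using Y B by (intro mult_strict_left_mono) auto
      finally show False by simp
    next
      case 2
      have "Y \<le> Y / (2 * (A + 1)) * A" using H[of "Y / (2 * (A + 1))"] 2 Y A by simp
      also have "\<dots> = Y * (A / (2 * (A + 1)))" by simp
      also have "\<dots> < Y * 1" using Y A by (intro mult_strict_left_mono) auto
      finally show False by simp
    qed
  qed
  then show ?thesis using A B by (smt (verit) real_sqrt_ge_zero zero_le_mult_iff)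
qed

lemma quadratic_bound:
  fixes Q N a :: real
  assumes "N \<ge> 0" "(a * N)\<^sup>2 \<le> Q * (2 * N - Q)"
  shows "\<bar>Q - N\<bar> \<le> N * sqrt (1 - a\<^sup>2)"
proof -
  have "(Q - N)\<^sup>2 \<le> N\<^sup>2 * (1 - a\<^sup>2)" using assms(2) by (simp add: power2_eq_square algebra_simps)
  then have "sqrt ((Q - N)\<^sup>2) \<le> sqrt (N\<^sup>2 * (1 - a\<^sup>2))" by (rule real_sqrt_le_mono)
  then show ?thesis using assms(1) by (simp add: real_sqrt_mult)
qed

lemma quadratic_bound_scaled:
  fixes Q N M D a :: real
  assumes "M \<ge> 0" "Q \<ge> 0" "N \<le> D * M" "(a * M)\<^sup>2 \<le> Q * (2 * N - Q)"
  shows "\<bar>Q - D * M\<bar> \<le> M * sqrt (D\<^sup>2 - a\<^sup>2)"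
proof -
  have "Q * (2 * N - Q) \<le> Q * (2 * (D * M) - Q)" using assms(2,3) by (intro mult_left_mono) auto
  then have "(Q - D * M)\<^sup>2 \<le> M\<^sup>2 * (D\<^sup>2 - a\<^sup>2)" using assms(4) by (simp add: power2_eq_square algebra_simps)
  then have "sqrt ((Q - D * M)\<^sup>2) \<le> sqrt (M\<^sup>2 * (D\<^sup>2 - a\<^sup>2))" by (rule real_sqrt_le_mono)
  then show ?thesis using assms(1) by (simp add: real_sqrt_mult)
qed

lemma weighted_graphD:
  assumes "weighted_graph b c"
  shows "b x y \<ge> 0" "c x \<ge> 0" "b x x = 0" "b x y = b y x" "(\<lambda>y. b x y) summable_on UNIV"
  using assms unfolding weighted_graph_def by blast+

lemma fin_supp_inD:
  assumes "fin_supp_in U \<phi>"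
  shows "finite {x. \<phi> x \<noteq> 0}" "{x. \<phi> x \<noteq> 0} \<subseteq> U"
  using assms unfolding fin_supp_in_def by auto

lemma fin_supp_in_diff:
  assumes "fin_supp_in U f" "fin_supp_in U g"
  shows "fin_supp_in U (\<lambda>x. f x - g x)"
proof -
  have "{x. f x - g x \<noteq> 0} \<subseteq> {x. f x \<noteq> 0} \<union> {x. g x \<noteq> 0}" by auto
  with assms show ?thesis unfolding fin_supp_in_def by (auto dest: finite_subset)
qed

lemma has_sum_finite_support:
  fixes w :: "'v \<Rightarrow> real"
  assumes fin: "finite S" and supp: "\<And>x. x \<notin> S \<Longrightarrow> \<phi> x = 0"
  shows "((\<lambda>x. w x * (\<phi> x)\<^sup>2) has_sum (\<Sum>x\<in>S. w x * (\<phi> x)\<^sup>2)) UNIV"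
proof -
  have "((\<lambda>x. w x * (\<phi> x)\<^sup>2) has_sum (\<Sum>x\<in>S. w x * (\<phi> x)\<^sup>2)) S"
    using fin by (rule has_sum_finiteI) simp
  then show ?thesis by (rule has_sum_cong_neutral[THEN iffD1, rotated -1]) (auto simp: supp)
qed

lemma normsq_finite_support:
  assumes "finite S" "\<And>x. x \<notin> S \<Longrightarrow> \<phi> x = 0"
  shows "normsq m \<phi> = (\<Sum>x\<in>S. m x * (\<phi> x)\<^sup>2)"
  unfolding normsq_def using infsumI[OF has_sum_finite_support[OF assms]] .

lemma summable_fin_supp:
  fixes w :: "'v \<Rightarrow> real"
  assumes "fin_supp_in U \<phi>"
  shows "(\<lambda>x. w x * (\<phi> x)\<^sup>2) summable_on UNIV"
  using has_sum_finite_support[OF fin_supp_inD(1)[OF assms], of \<phi> w] summable_on_def by auto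

lemma normsq_nonneg: "measure_on m \<Longrightarrow> normsq m \<phi> \<ge> 0"
  unfolding normsq_def measure_on_def by (intro infsum_nonneg mult_nonneg_nonneg) (auto intro: less_imp_le)

lemma normsq_mono_weight:
  assumes "fin_supp_in U \<phi>" "\<And>x. x \<in> U \<Longrightarrow> w1 x \<le> w2 x"
  shows "normsq w1 \<phi> \<le> normsq w2 \<phi>"
proof -
  define S where "S = {x. \<phi> x \<noteq> 0}"
  have fin: "finite S" and SU: "S \<subseteq> U" and supp: "\<And>x. x \<notin> S \<Longrightarrow> \<phi> x = 0"
    using fin_supp_inD[OF assms(1)] unfolding S_def by auto
  have "(\<Sum>x\<in>S. w1 x * (\<phi> x)\<^sup>2) \<le> (\<Sum>x\<in>S. w2 x * (\<phi> x)\<^sup>2)"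
    using assms(2) SU by (intro sum_mono mult_right_mono) auto
  then show ?thesis
    using normsq_finite_support[where \<phi>=\<phi> and m=w1, OF fin supp]
      normsq_finite_support[where \<phi>=\<phi> and m=w2, OF fin supp] by simp
qed

lemma normsq_scale: "fin_supp_in U \<phi> \<Longrightarrow> normsq (\<lambda>x. a * m x) \<phi> = a * normsq m \<phi>"
  using normsq_finite_support[OF fin_supp_inD(1), of U \<phi>]
  by (simp add: sum_distrib_left mult.assoc)

lemma nmeas_eq_deg_mult: "measure_on m \<Longrightarrow> nmeas b c x = deg b c m x * m x"
  unfolding deg_def measure_on_def by (metis less_irrefl nonzero_eq_divide_eq)

lemma Inf_deg_le:
  assumes "\<forall>x. nmeas b c x > 0" "measure_on m" "x \<in> U"
  shows "Inf (deg b c m ` U) \<le> deg b c m x"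
proof -
  have "bdd_below (deg b c m ` U)"
    using assms(1,2) unfolding deg_def measure_on_def by (auto intro!: bdd_belowI[of _ 0] less_imp_le)
  then show ?thesis using assms(3) by (auto intro: cInf_lower)
qed

lemma normsq_deg_bounds:
  assumes npos: "\<forall>x. nmeas b c x > 0" and m: "measure_on m" and \<phi>: "fin_supp_in U \<phi>"
  shows "Inf (deg b c m ` U) * normsq m \<phi> \<le> normsq (nmeas b c) \<phi>"
    "bdd_above (deg b c m ` U) \<Longrightarrow> normsq (nmeas b c) \<phi> \<le> Sup (deg b c m ` U) * normsq m \<phi>"
proof -
  have mx: "m x \<ge> 0" for x using m unfolding measure_on_def by (simp add: less_imp_le)
  have "Inf (deg b c m ` U) * m x \<le> nmeas b c x" if "x \<in> U" for x
    unfolding nmeas_eq_deg_mult[OF m] using Inf_deg_le[OF npos m that] mx by (rule mult_right_mono)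
  then have "normsq (\<lambda>x. Inf (deg b c m ` U) * m x) \<phi> \<le> normsq (nmeas b c) \<phi>"
    by (rule normsq_mono_weight[OF \<phi>])
  then show "Inf (deg b c m ` U) * normsq m \<phi> \<le> normsq (nmeas b c) \<phi>" by (simp add: normsq_scale[OF \<phi>])
  assume bdd: "bdd_above (deg b c m ` U)"
  have "nmeas b c x \<le> Sup (deg b c m ` U) * m x" if "x \<in> U" for x
    unfolding nmeas_eq_deg_mult[OF m] using cSup_upper[OF _ bdd] that mx by (intro mult_right_mono) auto
  then have "normsq (nmeas b c) \<phi> \<le> normsq (\<lambda>x. Sup (deg b c m ` U) * m x) \<phi>"
    by (rule normsq_mono_weight[OF \<phi>])
  then show "normsq (nmeas b c) \<phi> \<le> Sup (deg b c m ` U) * normsq m \<phi>" by (simp add: normsq_scale[OF \<phi>])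
qed

lemma has_sum_finite_rows:
  fixes f :: "'a \<Rightarrow> 'b \<Rightarrow> real"
  assumes "finite S" "\<And>x y. x \<in> S \<Longrightarrow> y \<in> T \<Longrightarrow> 0 \<le> f x y"
    "\<And>x. x \<in> S \<Longrightarrow> (f x has_sum g x) T"
  shows "((\<lambda>p. f (fst p) (snd p)) has_sum (\<Sum>x\<in>S. g x)) (S \<times> T)"
proof -
  have s: "(\<lambda>p. f (fst p) (snd p)) summable_on Sigma S (\<lambda>_. T)"
    by (rule summable_on_SigmaI[where g=g]) (use assms in auto)
  have "(g has_sum (\<Sum>x\<in>S. g x)) S" using assms(1) by (rule has_sum_finiteI) simp
  from has_sum_SigmaI[of S "\<lambda>p. f (fst p) (snd p)" "\<lambda>_. T" g, OF _ this s] assms(3)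
  show ?thesis by auto
qed

definition exit_weight :: "('v \<Rightarrow> 'v \<Rightarrow> real) \<Rightarrow> 'v set \<Rightarrow> 'v \<Rightarrow> real" where
  "exit_weight b S x = (\<Sum>\<^sub>\<infinity>y\<in>-S. b x y)"

context
  fixes b :: "'v \<Rightarrow> 'v \<Rightarrow> real" and c :: "'v \<Rightarrow> real"
  assumes wg: "weighted_graph b c"
begin

lemma exit_weight_has_sum: "((\<lambda>y. b x y) has_sum exit_weight b S x) (-S)"
  unfolding exit_weight_def using weighted_graphD(5)[OF wg] summable_on_subset_banach
  by (metis has_sum_infsum subset_UNIV)

lemma exit_weight_nonneg: "exit_weight b S x \<ge> 0"
  unfolding exit_weight_def by (rule infsum_nonneg) (use weighted_graphD[OF wg] in auto)

lemma nmeas_split: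
  assumes "finite S"
  shows "nmeas b c x = (\<Sum>y\<in>S. b x y) + exit_weight b S x + c x"
proof -
  have "((\<lambda>y. b x y) has_sum (\<Sum>y\<in>S. b x y) + exit_weight b S x) (S \<union> -S)"
    by (intro has_sum_Un_disjoint has_sum_finiteI exit_weight_has_sum assms) auto
  then show ?thesis unfolding nmeas_def by (simp add: infsumI)
qed

lemma edge_energy_has_sum:
  assumes fin: "finite S" and supp: "\<And>x. x \<notin> S \<Longrightarrow> \<phi> x = 0"
  shows "((\<lambda>p. b (fst p) (snd p) * (\<phi> (fst p) - \<phi> (snd p))\<^sup>2) has_sum
          ((\<Sum>x\<in>S. \<Sum>y\<in>S. b x y * (\<phi> x - \<phi> y)\<^sup>2) + 2 * (\<Sum>x\<in>S. exit_weight b S x * (\<phi> x)\<^sup>2))) UNIV"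
proof -
  note W = weighted_graphD[OF wg]
  define F where "F p = b (fst p) (snd p) * (\<phi> (fst p) - \<phi> (snd p))\<^sup>2" for p
  have exit_row: "((\<lambda>y. b x y * (\<phi> x)\<^sup>2) has_sum exit_weight b S x * (\<phi> x)\<^sup>2) (-S)" for x
    using has_sum_cmult_left[OF exit_weight_has_sum, where c="(\<phi> x)\<^sup>2"] by (simp add: mult.commute)
  have row: "((\<lambda>y. b x y * (\<phi> x - \<phi> y)\<^sup>2) has_sum
      ((\<Sum>y\<in>S. b x y * (\<phi> x - \<phi> y)\<^sup>2) + exit_weight b S x * (\<phi> x)\<^sup>2)) (S \<union> -S)" for x
  proof (rule has_sum_Un_disjoint)
    show "((\<lambda>y. b x y * (\<phi> x - \<phi> y)\<^sup>2) has_sum (\<Sum>y\<in>S. b x y * (\<phi> x - \<phi> y)\<^sup>2)) S"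
      using fin by (rule has_sum_finiteI) simp
    show "((\<lambda>y. b x y * (\<phi> x - \<phi> y)\<^sup>2) has_sum exit_weight b S x * (\<phi> x)\<^sup>2) (-S)"
      using exit_row by (rule has_sum_cong[THEN iffD1, rotated]) (simp add: supp)
  qed auto
  text \<open>Rows in S; columns in S with rows outside S (by symmetry); and the zero block.\<close>
  have h1: "(F has_sum (\<Sum>x\<in>S. (\<Sum>y\<in>S. b x y * (\<phi> x - \<phi> y)\<^sup>2) + exit_weight b S x * (\<phi> x)\<^sup>2)) (S \<times> UNIV)"
    unfolding F_def by (rule has_sum_finite_rows[OF fin]) (use W row in auto)
  have "((\<lambda>p. b (fst p) (snd p) * (\<phi> (fst p))\<^sup>2) has_sum (\<Sum>x\<in>S. exit_weight b S x * (\<phi> x)\<^sup>2)) (S \<times> (-S))"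
    by (rule has_sum_finite_rows[OF fin]) (use W exit_row in auto)
  then have "((\<lambda>(x,y). F (y,x)) has_sum (\<Sum>x\<in>S. exit_weight b S x * (\<phi> x)\<^sup>2)) (S \<times> (-S))"
    by (rule has_sum_cong[THEN iffD1, rotated]) (auto simp: F_def supp W(4))
  then have h2: "(F has_sum (\<Sum>x\<in>S. exit_weight b S x * (\<phi> x)\<^sup>2)) ((-S) \<times> S)"
    using has_sum_swap by blast
  have h3: "(F has_sum 0) ((-S) \<times> (-S))"
    by (rule has_sum_0) (auto simp: F_def supp)
  have "(F has_sum ((\<Sum>x\<in>S. (\<Sum>y\<in>S. b x y * (\<phi> x - \<phi> y)\<^sup>2) + exit_weight b S x * (\<phi> x)\<^sup>2)
      + ((\<Sum>x\<in>S. exit_weight b S x * (\<phi> x)\<^sup>2) + 0))) (S \<times> UNIV \<union> ((-S) \<times> S \<union> (-S) \<times> (-S)))"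
    by (intro has_sum_Un_disjoint h1 h2 h3) auto
  moreover have "S \<times> UNIV \<union> ((-S) \<times> S \<union> (-S) \<times> (-S)) = UNIV" by auto
  ultimately show ?thesis unfolding F_def by (simp add: sum.distrib add.commute)
qed

lemma edge_energy_summable:
  assumes "fin_supp_in U \<phi>"
  shows "(\<lambda>p. b (fst p) (snd p) * (\<phi> (fst p) - \<phi> (snd p))\<^sup>2) summable_on UNIV"
  using edge_energy_has_sum[OF fin_supp_inD(1)[OF assms], of \<phi>] summable_on_def by auto

lemma Qmax_finite_support:
  assumes fin: "finite S" and supp: "\<And>x. x \<notin> S \<Longrightarrow> \<phi> x = 0"
  shows "Qmax b c \<phi> = (\<Sum>x\<in>S. \<Sum>y\<in>S. b x y * (\<phi> x - \<phi> y)\<^sup>2) / 2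
                       + (\<Sum>x\<in>S. (exit_weight b S x + c x) * (\<phi> x)\<^sup>2)"
  unfolding Qmax_def
  using infsumI[OF edge_energy_has_sum[OF assms]] infsumI[OF has_sum_finite_support[OF assms]]
  by (simp add: algebra_simps sum.distrib)

lemma Qmax_nonneg: "Qmax b c \<phi> \<ge> 0"
  unfolding Qmax_def using weighted_graphD[OF wg]
  by (intro add_nonneg_nonneg divide_nonneg_nonneg infsum_nonneg) auto

subsection \<open>The isoperimetric constant\<close>

lemma boundary_nonneg: "boundary b c W \<ge> 0"
  unfolding boundary_def using weighted_graphD[OF wg]
  by (intro add_nonneg_nonneg sum_nonneg infsum_nonneg) auto

lemma boundary_finite:
  assumes "finite W"
  shows "boundary b c W = (\<Sum>x\<in>W. nmeas b c x) - (\<Sum>x\<in>W. \<Sum>y\<in>W. b x y)"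
  using nmeas_split[OF assms] unfolding boundary_def exit_weight_def by (simp add: sum.distrib)

lemma alpha_le_boundary:
  assumes mu: "\<And>x. \<mu> x > 0" and W: "W \<subseteq> U" "finite W" "W \<noteq> {}"
  shows "alpha b c \<mu> U * (\<Sum>x\<in>W. \<mu> x) \<le> boundary b c W"
proof -
  have pos: "(\<Sum>x\<in>W. \<mu> x) > 0" using W mu by (intro sum_pos) auto
  have "bdd_below {boundary b c W / (\<Sum>x\<in>W. \<mu> x) | W. W \<subseteq> U \<and> finite W \<and> W \<noteq> {}}"
    using boundary_nonneg mu by (auto intro!: bdd_belowI[of _ 0] divide_nonneg_pos sum_pos)
  then have "alpha b c \<mu> U \<le> boundary b c W / (\<Sum>x\<in>W. \<mu> x)"
    unfolding alpha_def by (rule cInf_lower[rotated]) (use W in blast)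
  then show ?thesis using pos by (simp add: pos_le_divide_eq)
qed

lemma alpha_nonneg:
  assumes mu: "\<And>x. \<mu> x > 0" and U: "U \<noteq> {}"
  shows "alpha b c \<mu> U \<ge> 0"
proof -
  obtain x where "x \<in> U" using U by auto
  then have "{boundary b c W / (\<Sum>x\<in>W. \<mu> x) | W. W \<subseteq> U \<and> finite W \<and> W \<noteq> {}} \<noteq> {}"
    by (auto intro!: exI[of _ "{x}"])
  then show ?thesis unfolding alpha_def
    by (rule cInf_greatest) (auto intro!: divide_nonneg_pos sum_pos boundary_nonneg mu)
qed

lemma alpha_le_vertex:
  assumes mu: "\<And>x. \<mu> x > 0" and x: "x \<in> U"
  shows "alpha b c \<mu> U * \<mu> x \<le> nmeas b c x"
  using alpha_le_boundary[OF mu, of "{x}" U] x boundary_finite[of "{x}"] weighted_graphD(3)[OF wg]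
  by simp

subsection \<open>The co-area inequality\<close>

lemma sum_layer_split:
  fixes w :: "'v \<Rightarrow> real"
  assumes "finite S" "W \<subseteq> S"
  shows "(\<Sum>x\<in>S. w x * ((if x \<in> W then t else 0) + h x)) = t * (\<Sum>x\<in>W. w x) + (\<Sum>x\<in>S. w x * h x)"
proof -
  have "w x * ((if x \<in> W then t else 0) + h x) = (if x \<in> W then t * w x else 0) + w x * h x" for x
    by (simp add: algebra_simps)
  then have "(\<Sum>x\<in>S. w x * ((if x \<in> W then t else 0) + h x))
      = (\<Sum>x\<in>S \<inter> W. t * w x) + (\<Sum>x\<in>S. w x * h x)"
    using assms(1) by (simp add: sum.distrib sum.inter_restrict)
  also have "S \<inter> W = W" using assms(2) by auto
  finally show ?thesis by (simp add: sum_distrib_left)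
qed

lemma min_sum_layer_split:
  assumes fin: "finite S" and WS: "W \<subseteq> S" and t: "t \<ge> 0"
    and h: "\<And>x. h x \<ge> 0" and hW: "\<And>x. x \<notin> W \<Longrightarrow> h x = 0"
  defines "g \<equiv> \<lambda>x. (if x \<in> W then t else 0) + h x"
  shows "(\<Sum>x\<in>S. \<Sum>y\<in>S. b x y * min (g x) (g y))
       = t * (\<Sum>x\<in>W. \<Sum>y\<in>W. b x y) + (\<Sum>x\<in>S. \<Sum>y\<in>S. b x y * min (h x) (h y))"
proof -
  have min_split: "min (g x) (g y) = (if y \<in> W then (if x \<in> W then t else 0) else 0) + min (h x) (h y)" for x y
    using h[of x] h[of y] hW[of x] hW[of y] t unfolding g_def by auto
  have "(\<Sum>y\<in>S. b x y * min (g x) (g y))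
      = (if x \<in> W then t else 0) * (\<Sum>y\<in>W. b x y) + (\<Sum>y\<in>S. b x y * min (h x) (h y))" for x
    unfolding min_split using sum_layer_split[OF fin WS, of "b x" "if x \<in> W then t else 0"]
    by (simp add: mult.commute)
  then have "(\<Sum>x\<in>S. \<Sum>y\<in>S. b x y * min (g x) (g y))
      = (\<Sum>x\<in>S. (\<Sum>y\<in>W. b x y) * ((if x \<in> W then t else 0) + 0))
        + (\<Sum>x\<in>S. \<Sum>y\<in>S. b x y * min (h x) (h y))"
    by (simp add: sum.distrib mult.commute)
  also have "\<dots> = t * (\<Sum>x\<in>W. \<Sum>y\<in>W. b x y) + (\<Sum>x\<in>S. \<Sum>y\<in>S. b x y * min (h x) (h y))"
    using sum_layer_split[OF fin WS, of "\<lambda>x. \<Sum>y\<in>W. b x y" t "\<lambda>_. 0"] by simp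
  finally show ?thesis .
qed

text \<open>Proof by peeling off the lowest
  layer Min g 1_W of g, whose contribution is t (boundary W - alpha mu(W)) \<ge> 0.\<close>
lemma coarea:
  assumes mu: "\<And>x. \<mu> x > 0" and fin: "finite S" and SU: "S \<subseteq> U"
    and g: "\<And>x. g x \<ge> 0" and gS: "\<And>x. x \<notin> S \<Longrightarrow> g x = 0"
  shows "alpha b c \<mu> U * (\<Sum>x\<in>S. \<mu> x * g x)
     \<le> (\<Sum>x\<in>S. nmeas b c x * g x) - (\<Sum>x\<in>S. \<Sum>y\<in>S. b x y * min (g x) (g y))"
  using g gS
proof (induction "card {x\<in>S. g x \<noteq> 0}" arbitrary: g rule: less_induct)
  case less
  define W where "W = {x\<in>S. g x \<noteq> 0}"
  have finW: "finite W" and WS: "W \<subseteq> S" using fin by (auto simp: W_def)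
  show ?case
  proof (cases "W = {}")
    case True
    then have "\<And>x. x \<in> S \<Longrightarrow> g x = 0" by (auto simp: W_def)
    then show ?thesis by simp
  next
    case False
    define t where "t = Min (g ` W)"
    have "t \<in> g ` W" unfolding t_def using False finW by (intro Min_in) auto
    then obtain x0 where x0: "x0 \<in> W" "g x0 = t" by auto
    have t_le: "\<And>x. x \<in> W \<Longrightarrow> t \<le> g x" unfolding t_def using finW by auto
    have t: "t \<ge> 0" using less.prems(1) x0 by auto
    define h where "h x = (if x \<in> W then g x - t else 0)" for x
    have h: "\<And>x. h x \<ge> 0" and hS: "\<And>x. x \<notin> S \<Longrightarrow> h x = 0" and hW: "\<And>x. x \<notin> W \<Longrightarrow> h x = 0"
      using t_le WS by (auto simp: h_def)
    have g_split: "g = (\<lambda>x. (if x \<in> W then t else 0) + h x)"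
      using less.prems(2) by (force simp: h_def W_def)
    have "{x\<in>S. h x \<noteq> 0} \<subset> W" using x0 by (auto simp: h_def W_def)
    then have "card {x\<in>S. h x \<noteq> 0} < card {x\<in>S. g x \<noteq> 0}"
      unfolding W_def[symmetric] using finW by (rule psubset_card_mono[rotated])
    note IH = less.hyps[OF this h hS]
    have "t * (alpha b c \<mu> U * (\<Sum>x\<in>W. \<mu> x)) \<le> t * ((\<Sum>x\<in>W. nmeas b c x) - (\<Sum>x\<in>W. \<Sum>y\<in>W. b x y))"
      using alpha_le_boundary[OF mu, of W U] WS SU finW False boundary_finite[OF finW] t
      by (intro mult_left_mono) auto
    moreover have "(\<Sum>x\<in>S. \<Sum>y\<in>S. b x y * min (g x) (g y))
       = t * (\<Sum>x\<in>W. \<Sum>y\<in>W. b x y) + (\<Sum>x\<in>S. \<Sum>y\<in>S. b x y * min (h x) (h y))"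
      unfolding g_split by (rule min_sum_layer_split[OF fin WS t h hW])
    moreover have "(\<Sum>x\<in>S. w x * g x) = t * (\<Sum>x\<in>W. w x) + (\<Sum>x\<in>S. w x * h x)" for w
      unfolding g_split by (rule sum_layer_split[OF fin WS])
    ultimately show ?thesis using IH by (simp only:) (simp add: algebra_simps)
  qed
qed

subsection \<open>The key inequality for finitely supported functions\<close>

lemma energy_decomposition:
  fixes \<phi> :: "'v \<Rightarrow> real"
  assumes fin: "finite S" and supp: "\<And>x. x \<notin> S \<Longrightarrow> \<phi> x = 0"
  defines "A \<equiv> (\<Sum>x\<in>S. \<Sum>y\<in>S. b x y * (\<phi> x - \<phi> y)\<^sup>2)"
    and "Bp \<equiv> (\<Sum>x\<in>S. \<Sum>y\<in>S. b x y * (\<phi> x + \<phi> y)\<^sup>2)"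
    and "B \<equiv> (\<Sum>x\<in>S. \<Sum>y\<in>S. b x y * (\<phi> x)\<^sup>2)"
    and "R \<equiv> (\<Sum>x\<in>S. (exit_weight b S x + c x) * (\<phi> x)\<^sup>2)"
  shows "Qmax b c \<phi> = A / 2 + R" "normsq (nmeas b c) \<phi> = B + R" "A + Bp = 4 * B"
    "A \<ge> 0" "Bp \<ge> 0" "R \<ge> 0"
proof -
  note W = weighted_graphD[OF wg]
  show "Qmax b c \<phi> = A / 2 + R" unfolding A_def R_def by (rule Qmax_finite_support[OF fin supp])
  have "normsq (nmeas b c) \<phi> = (\<Sum>x\<in>S. nmeas b c x * (\<phi> x)\<^sup>2)"
    by (rule normsq_finite_support[OF fin supp])
  also have "\<dots> = (\<Sum>x\<in>S. (\<Sum>y\<in>S. b x y * (\<phi> x)\<^sup>2) + (exit_weight b S x + c x) * (\<phi> x)\<^sup>2)"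
    by (simp add: nmeas_split[OF fin] algebra_simps sum_distrib_right)
  finally have "normsq (nmeas b c) \<phi> = (\<Sum>x\<in>S. (\<Sum>y\<in>S. b x y * (\<phi> x)\<^sup>2) + (exit_weight b S x + c x) * (\<phi> x)\<^sup>2)" .
  then show "normsq (nmeas b c) \<phi> = B + R" unfolding B_def R_def by (simp add: sum.distrib)
  have B_swap: "(\<Sum>x\<in>S. \<Sum>y\<in>S. b x y * (\<phi> y)\<^sup>2) = B"
    unfolding B_def by (subst sum.swap) (simp add: W(4))
  have "A + Bp = (\<Sum>x\<in>S. \<Sum>y\<in>S. 2 * (b x y * (\<phi> x)\<^sup>2) + 2 * (b x y * (\<phi> y)\<^sup>2))"
    unfolding A_def Bp_def by (simp add: sum.distrib[symmetric] power2_eq_square algebra_simps)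
  also have "\<dots> = 2 * B + 2 * (\<Sum>x\<in>S. \<Sum>y\<in>S. b x y * (\<phi> y)\<^sup>2)"
    unfolding B_def by (simp only: sum.distrib sum_distrib_left[symmetric])
  finally show "A + Bp = 4 * B" using B_swap by simp
  show "A \<ge> 0" "Bp \<ge> 0" unfolding A_def Bp_def using W by (auto intro!: sum_nonneg)
  show "R \<ge> 0" unfolding R_def using W exit_weight_nonneg by (auto intro!: sum_nonneg)
qed

text \<open>The co-area defect \<Sum>\<Sum> b ((phi x^2 + phi y^2)/2 - min (phi x^2) (phi y^2))
  = \<Sum>\<Sum> b |phi x - phi y| |phi x + phi y| / 2 is controlled by AM-GM.\<close>
lemma min_defect_le:
  fixes \<phi> :: "'v \<Rightarrow> real" and l :: real
  assumes l: "l > 0"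
  shows "(\<Sum>x\<in>S. \<Sum>y\<in>S. b x y * (\<phi> x)\<^sup>2) - (\<Sum>x\<in>S. \<Sum>y\<in>S. b x y * min ((\<phi> x)\<^sup>2) ((\<phi> y)\<^sup>2))
    \<le> l * (\<Sum>x\<in>S. \<Sum>y\<in>S. b x y * (\<phi> x - \<phi> y)\<^sup>2) / 4 + (\<Sum>x\<in>S. \<Sum>y\<in>S. b x y * (\<phi> x + \<phi> y)\<^sup>2) / (4 * l)"
proof -
  note W = weighted_graphD[OF wg]
  have pt: "b x y * (((\<phi> x)\<^sup>2 + (\<phi> y)\<^sup>2) / 2 - min ((\<phi> x)\<^sup>2) ((\<phi> y)\<^sup>2))
      \<le> l * (b x y * (\<phi> x - \<phi> y)\<^sup>2) / 4 + b x y * (\<phi> x + \<phi> y)\<^sup>2 / (4 * l)" for x y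
  proof -
    have "(\<phi> x - \<phi> y) * (\<phi> x + \<phi> y) = (\<phi> x)\<^sup>2 - (\<phi> y)\<^sup>2" by (simp add: power2_eq_square algebra_simps)
    then have "((\<phi> x)\<^sup>2 + (\<phi> y)\<^sup>2) / 2 - min ((\<phi> x)\<^sup>2) ((\<phi> y)\<^sup>2) = \<bar>(\<phi> x - \<phi> y) * (\<phi> x + \<phi> y)\<bar> / 2"
      by (auto simp: min_def abs_if)
    also have "\<dots> \<le> (l * (\<phi> x - \<phi> y)\<^sup>2 + (\<phi> x + \<phi> y)\<^sup>2 / l) / 4"
      using two_abs_mult_le[OF l, of "\<phi> x - \<phi> y" "\<phi> x + \<phi> y"] by simp
    finally have "b x y * (((\<phi> x)\<^sup>2 + (\<phi> y)\<^sup>2) / 2 - min ((\<phi> x)\<^sup>2) ((\<phi> y)\<^sup>2))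
        \<le> b x y * ((l * (\<phi> x - \<phi> y)\<^sup>2 + (\<phi> x + \<phi> y)\<^sup>2 / l) / 4)"
      using W(1) by (rule mult_left_mono)
    then show ?thesis by (simp add: algebra_simps add_divide_distrib)
  qed
  have sym: "(\<Sum>x\<in>S. \<Sum>y\<in>S. b x y * (\<phi> y)\<^sup>2) = (\<Sum>x\<in>S. \<Sum>y\<in>S. b x y * (\<phi> x)\<^sup>2)"
    by (subst sum.swap) (simp add: W(4))
  have "(\<Sum>x\<in>S. \<Sum>y\<in>S. b x y * (\<phi> x)\<^sup>2) - (\<Sum>x\<in>S. \<Sum>y\<in>S. b x y * min ((\<phi> x)\<^sup>2) ((\<phi> y)\<^sup>2))
     = (\<Sum>x\<in>S. \<Sum>y\<in>S. b x y * (((\<phi> x)\<^sup>2 + (\<phi> y)\<^sup>2) / 2 - min ((\<phi> x)\<^sup>2) ((\<phi> y)\<^sup>2)))"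
  proof -
    have "b x y * (((\<phi> x)\<^sup>2 + (\<phi> y)\<^sup>2) / 2 - min ((\<phi> x)\<^sup>2) ((\<phi> y)\<^sup>2))
       = b x y * (\<phi> x)\<^sup>2 / 2 + b x y * (\<phi> y)\<^sup>2 / 2 - b x y * min ((\<phi> x)\<^sup>2) ((\<phi> y)\<^sup>2)" for x y
      by (simp add: algebra_simps)
    then show ?thesis
      by (simp only: sum.distrib sum_subtractf sum_divide_distrib[symmetric]) (simp add: sym)
  qed
  also have "\<dots> \<le> (\<Sum>x\<in>S. \<Sum>y\<in>S. l * (b x y * (\<phi> x - \<phi> y)\<^sup>2) / 4 + b x y * (\<phi> x + \<phi> y)\<^sup>2 / (4 * l))"
    by (intro sum_mono pt)
  also have "\<dots> = l * (\<Sum>x\<in>S. \<Sum>y\<in>S. b x y * (\<phi> x - \<phi> y)\<^sup>2) / 4 + (\<Sum>x\<in>S. \<Sum>y\<in>S. b x y * (\<phi> x + \<phi> y)\<^sup>2) / (4 * l)"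
    by (simp only: sum.distrib sum_divide_distrib sum_distrib_left times_divide_eq_right)
  finally show ?thesis .
qed

lemma alpha_normsq_le_sqrt_energy:
  assumes mu: "\<And>x. \<mu> x > 0" and \<phi>: "fin_supp_in U \<phi>"
  shows "Qmax b c \<phi> \<le> 2 * normsq (nmeas b c) \<phi>"
    "alpha b c \<mu> U * normsq \<mu> \<phi> \<le> sqrt (Qmax b c \<phi> * (2 * normsq (nmeas b c) \<phi> - Qmax b c \<phi>))"
proof -
  define S where "S = {x. \<phi> x \<noteq> 0}"
  have fin: "finite S" and SU: "S \<subseteq> U" and supp: "\<And>x. x \<notin> S \<Longrightarrow> \<phi> x = 0"
    using fin_supp_inD[OF \<phi>] unfolding S_def by auto
  define A where "A = (\<Sum>x\<in>S. \<Sum>y\<in>S. b x y * (\<phi> x - \<phi> y)\<^sup>2)"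
  define Bp where "Bp = (\<Sum>x\<in>S. \<Sum>y\<in>S. b x y * (\<phi> x + \<phi> y)\<^sup>2)"
  define B where "B = (\<Sum>x\<in>S. \<Sum>y\<in>S. b x y * (\<phi> x)\<^sup>2)"
  define R where "R = (\<Sum>x\<in>S. (exit_weight b S x + c x) * (\<phi> x)\<^sup>2)"
  define Q where "Q = Qmax b c \<phi>"
  define N where "N = normsq (nmeas b c) \<phi>"
  define Y where "Y = alpha b c \<mu> U * normsq \<mu> \<phi>"
  note E = energy_decomposition[where \<phi>=\<phi>, OF fin supp, folded A_def Bp_def B_def R_def Q_def N_def]
  have dual: "2 * N - Q = Bp / 2 + R" using E by simp
  then show "Qmax b c \<phi> \<le> 2 * normsq (nmeas b c) \<phi>" using E unfolding Q_def N_def by simp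
  have coarea_phi: "Y \<le> N - (\<Sum>x\<in>S. \<Sum>y\<in>S. b x y * min ((\<phi> x)\<^sup>2) ((\<phi> y)\<^sup>2))"
    using coarea[where \<mu>=\<mu>, OF mu fin SU, of "\<lambda>x. (\<phi> x)\<^sup>2"] supp
      normsq_finite_support[where \<phi>=\<phi>, OF fin supp]
    unfolding Y_def N_def by simp
  have "Y \<le> l * (Q / 2) + ((2 * N - Q) / 2) / l" if l: "l > 0" for l
  proof -
    have "2 \<le> l + 1 / l" using two_abs_mult_le[OF l, of 1 1] by simp
    then have "R * 2 \<le> R * (l + 1 / l)" using E(6) by (rule mult_left_mono)
    then have "R \<le> l * R / 2 + R / (2 * l)" by (simp add: algebra_simps)
    then have "Y \<le> (l * A / 4 + Bp / (4 * l)) + (l * R / 2 + R / (2 * l))"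
      using coarea_phi min_defect_le[OF l, where S=S and \<phi>=\<phi>] E(2) unfolding A_def Bp_def B_def N_def by linarith
    also have "\<dots> = l * ((A / 2 + R) / 2) + ((Bp / 2 + R) / 2) / l"
      using l by (simp add: field_simps)
    also have "\<dots> = l * (Q / 2) + ((2 * N - Q) / 2) / l" using E(1) dual by simp
    finally show ?thesis .
  qed
  then have "Y \<le> 2 * sqrt ((Q / 2) * ((2 * N - Q) / 2))"
    by (intro le_two_sqrt_mult) (use E dual in auto)
  also have "\<dots> = sqrt (Q * (2 * N - Q))" by (simp add: real_sqrt_divide real_sqrt_mult)
  finally show "alpha b c \<mu> U * normsq \<mu> \<phi> \<le> sqrt (Qmax b c \<phi> * (2 * normsq (nmeas b c) \<phi> - Qmax b c \<phi>))"
    unfolding Y_def Q_def N_def .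
qed

lemma key_inequality:
  assumes mu: "\<And>x. \<mu> x > 0" and \<phi>: "fin_supp_in U \<phi>"
  shows "(alpha b c \<mu> U * normsq \<mu> \<phi>)\<^sup>2 \<le> Qmax b c \<phi> * (2 * normsq (nmeas b c) \<phi> - Qmax b c \<phi>)"
proof -
  note bound = alpha_normsq_le_sqrt_energy[where \<mu>=\<mu>, OF mu \<phi>]
  have "0 \<le> alpha b c \<mu> U * normsq \<mu> \<phi>"
  proof (cases "U = {}")
    case True
    then have "\<phi> = (\<lambda>_. 0)" using fin_supp_inD(2)[OF \<phi>] by auto
    then show ?thesis by (simp add: normsq_def)
  next
    case False
    then show ?thesis
      using alpha_nonneg[OF mu False] normsq_nonneg[of \<mu>] mu unfolding measure_on_def by auto
  qed
  then have "(alpha b c \<mu> U * normsq \<mu> \<phi>)\<^sup>2 \<le> (sqrt (Qmax b c \<phi> * (2 * normsq (nmeas b c) \<phi> - Qmax b c \<phi>)))\<^sup>2"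
    using bound(2) by (intro power_mono)
  moreover have "0 \<le> Qmax b c \<phi> * (2 * normsq (nmeas b c) \<phi> - Qmax b c \<phi>)"
    using bound(1) Qmax_nonneg by simp
  ultimately show ?thesis by simp
qed

text \<open>alpha_n(U) \<le> 1, so that the first square root is real (test the isoperimetric
  ratio with a single vertex).\<close>
lemma alpha_nmeas_le_one:
  assumes npos: "\<forall>x. nmeas b c x > 0" and U: "U \<noteq> {}"
  shows "0 \<le> alpha b c (nmeas b c) U" "alpha b c (nmeas b c) U \<le> 1"
proof -
  show "0 \<le> alpha b c (nmeas b c) U" using alpha_nonneg[OF _ U] npos by auto
  obtain x where x: "x \<in> U" using U by auto
  have "alpha b c (nmeas b c) U * nmeas b c x \<le> 1 * nmeas b c x"
    using alpha_le_vertex[OF _ x, of "nmeas b c"] npos by auto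
  then show "alpha b c (nmeas b c) U \<le> 1" using npos by (simp add: mult_le_cancel_right)
qed

text \<open>First pair of bounds for finitely supported functions: the key inequality with mu = n
  gives |Q(phi) - N| \<le> N sqrt(1 - alpha_n^2), and N is compared with \<parallel>phi\<parallel>_m^2 through d.\<close>
lemma finite_support_bounds_n:
  assumes npos: "\<forall>x. nmeas b c x > 0" and m: "measure_on m" and U: "U \<noteq> {}"
    and \<phi>: "fin_supp_in U \<phi>"
  defines "s \<equiv> sqrt (1 - (alpha b c (nmeas b c) U)\<^sup>2)"
  shows "Inf (deg b c m ` U) * (1 - s) * normsq m \<phi> \<le> Qmax b c \<phi>"
    "bdd_above (deg b c m ` U) \<Longrightarrow> Qmax b c \<phi> \<le> Sup (deg b c m ` U) * ((1 + s) * normsq m \<phi>)"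
proof -
  define N where "N = normsq (nmeas b c) \<phi>"
  have N0: "N \<ge> 0" unfolding N_def using npos normsq_nonneg measure_on_def by metis
  have "\<bar>Qmax b c \<phi> - N\<bar> \<le> N * s"
    unfolding s_def using key_inequality[of "nmeas b c" U \<phi>] npos \<phi>
    by (intro quadratic_bound[OF N0]) (simp add: N_def)
  then have Q: "N - N * s \<le> Qmax b c \<phi>" "Qmax b c \<phi> \<le> N + N * s" by (auto simp: abs_le_iff)
  have "(alpha b c (nmeas b c) U)\<^sup>2 \<le> 1" using alpha_nmeas_le_one[OF npos U] by (intro power_le_one) auto
  then have s: "0 \<le> s" "s \<le> 1" unfolding s_def by auto
  note NM = normsq_deg_bounds[OF npos m \<phi>, folded N_def]
  have "Inf (deg b c m ` U) * (1 - s) * normsq m \<phi> = (1 - s) * (Inf (deg b c m ` U) * normsq m \<phi>)" by simp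
  also have "\<dots> \<le> (1 - s) * N" using NM(1) s by (intro mult_left_mono) auto
  finally show "Inf (deg b c m ` U) * (1 - s) * normsq m \<phi> \<le> Qmax b c \<phi>" using Q by (simp add: algebra_simps)
  assume "bdd_above (deg b c m ` U)"
  then have "(1 + s) * N \<le> (1 + s) * (Sup (deg b c m ` U) * normsq m \<phi>)"
    using NM(2) s by (intro mult_left_mono) auto
  then show "Qmax b c \<phi> \<le> Sup (deg b c m ` U) * ((1 + s) * normsq m \<phi>)"
    using Q by (simp add: algebra_simps)
qed

lemma finite_support_bounds_m:
  assumes npos: "\<forall>x. nmeas b c x > 0" and m: "measure_on m"
    and \<phi>: "fin_supp_in U \<phi>" and bdd: "bdd_above (deg b c m ` U)"
  defines "D \<equiv> Sup (deg b c m ` U)"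
  defines "T \<equiv> sqrt (D\<^sup>2 - (alpha b c m U)\<^sup>2)"
  shows "(D - T) * normsq m \<phi> \<le> Qmax b c \<phi>" "Qmax b c \<phi> \<le> (D + T) * normsq m \<phi>"
proof -
  have mpos: "\<And>x. m x > 0" using m unfolding measure_on_def by auto
  have "\<bar>Qmax b c \<phi> - D * normsq m \<phi>\<bar> \<le> normsq m \<phi> * T"
    unfolding T_def
  proof (rule quadratic_bound_scaled)
    show "0 \<le> normsq m \<phi>" "0 \<le> Qmax b c \<phi>" using normsq_nonneg[OF m] Qmax_nonneg by auto
    show "normsq (nmeas b c) \<phi> \<le> D * normsq m \<phi>" unfolding D_def by (rule normsq_deg_bounds(2)[OF npos m \<phi> bdd])
    show "(alpha b c m U * normsq m \<phi>)\<^sup>2 \<le> Qmax b c \<phi> * (2 * normsq (nmeas b c) \<phi> - Qmax b c \<phi>)"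
      by (rule key_inequality[OF mpos \<phi>])
  qed
  then show "(D - T) * normsq m \<phi> \<le> Qmax b c \<phi>" "Qmax b c \<phi> \<le> (D + T) * normsq m \<phi>"
    by (auto simp: abs_le_iff algebra_simps)
qed

end

subsection \<open>Triangle inequalities for the form and the norm\<close>

lemma sq_add_le:
  fixes u v l :: real
  assumes l: "l > 0"
  shows "(u + v)\<^sup>2 \<le> (1 + l) * u\<^sup>2 + (1 + 1 / l) * v\<^sup>2"
proof -
  have "2 * (u * v) \<le> 2 * \<bar>u * v\<bar>" by simp
  also have "\<dots> \<le> l * u\<^sup>2 + v\<^sup>2 / l" by (rule two_abs_mult_le[OF l])
  finally show ?thesis by (simp add: power2_eq_square algebra_simps)
qed

lemma sqrt_le_sqrt_add:
  fixes X A B :: real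
  assumes A: "A \<ge> 0" and B: "B \<ge> 0" and H: "\<And>l. l > 0 \<Longrightarrow> X \<le> (1 + l) * A + (1 + 1 / l) * B"
  shows "sqrt X \<le> sqrt A + sqrt B"
proof -
  have "X - A - B \<le> 2 * sqrt (A * B)"
    by (rule le_two_sqrt_mult[OF A B]) (use H in \<open>auto simp: algebra_simps\<close>)
  then have "X \<le> (sqrt A + sqrt B)\<^sup>2" using A B by (simp add: power2_eq_square algebra_simps real_sqrt_mult)
  then have "sqrt X \<le> sqrt ((sqrt A + sqrt B)\<^sup>2)" by (rule real_sqrt_le_mono)
  then show ?thesis using A B by simp
qed

lemma weighted_sq_sum_add:
  fixes w f g :: "'a \<Rightarrow> real"
  assumes w: "\<And>x. x \<in> A \<Longrightarrow> w x \<ge> 0"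
    and sf: "(\<lambda>x. w x * (f x)\<^sup>2) summable_on A" and sg: "(\<lambda>x. w x * (g x)\<^sup>2) summable_on A"
  shows "(\<lambda>x. w x * (f x + g x)\<^sup>2) summable_on A"
    "\<And>l. l > 0 \<Longrightarrow> (\<Sum>\<^sub>\<infinity>x\<in>A. w x * (f x + g x)\<^sup>2)
        \<le> (1 + l) * (\<Sum>\<^sub>\<infinity>x\<in>A. w x * (f x)\<^sup>2) + (1 + 1 / l) * (\<Sum>\<^sub>\<infinity>x\<in>A. w x * (g x)\<^sup>2)"
proof -
  have pt: "w x * (f x + g x)\<^sup>2 \<le> (1 + l) * (w x * (f x)\<^sup>2) + (1 + 1 / l) * (w x * (g x)\<^sup>2)"
    if "x \<in> A" "l > 0" for x l
    using mult_left_mono[OF sq_add_le[OF that(2), of "f x" "g x"] w[OF that(1)]]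
    by (simp add: algebra_simps)
  have sR: "(\<lambda>x. (1 + l) * (w x * (f x)\<^sup>2) + (1 + 1 / l) * (w x * (g x)\<^sup>2)) summable_on A" for l
    by (intro summable_on_add summable_on_cmult_right sf sg)
  show s: "(\<lambda>x. w x * (f x + g x)\<^sup>2) summable_on A"
    by (rule summable_on_comparison_test[OF sR[of 1]]) (use pt[of _ 1] w in auto)
  fix l :: real assume l: "l > 0"
  have "(\<Sum>\<^sub>\<infinity>x\<in>A. w x * (f x + g x)\<^sup>2)
      \<le> (\<Sum>\<^sub>\<infinity>x\<in>A. (1 + l) * (w x * (f x)\<^sup>2) + (1 + 1 / l) * (w x * (g x)\<^sup>2))"
    by (rule infsum_mono[OF s sR]) (use pt l in auto)
  also have "\<dots> = (1 + l) * (\<Sum>\<^sub>\<infinity>x\<in>A. w x * (f x)\<^sup>2) + (1 + 1 / l) * (\<Sum>\<^sub>\<infinity>x\<in>A. w x * (g x)\<^sup>2)"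
    by (subst infsum_add) (auto intro!: summable_on_cmult_right sf sg simp: infsum_cmult_right sf sg)
  finally show "(\<Sum>\<^sub>\<infinity>x\<in>A. w x * (f x + g x)\<^sup>2)
        \<le> (1 + l) * (\<Sum>\<^sub>\<infinity>x\<in>A. w x * (f x)\<^sup>2) + (1 + 1 / l) * (\<Sum>\<^sub>\<infinity>x\<in>A. w x * (g x)\<^sup>2)" .
qed

lemma sqrt_normsq_dist:
  assumes m: "measure_on m"
    and sf: "(\<lambda>x. m x * (f x)\<^sup>2) summable_on UNIV" and sg: "(\<lambda>x. m x * (g x)\<^sup>2) summable_on UNIV"
  shows "\<bar>sqrt (normsq m f) - sqrt (normsq m g)\<bar> \<le> sqrt (normsq m (\<lambda>x. f x - g x))"
proof -
  have w: "\<And>x. x \<in> UNIV \<Longrightarrow> m x \<ge> 0" using m unfolding measure_on_def by (auto intro: less_imp_le)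
  have triangle: "sqrt (normsq m h) \<le> sqrt (normsq m k) + sqrt (normsq m (\<lambda>x. h x - k x))"
    if sh: "(\<lambda>x. m x * (h x)\<^sup>2) summable_on UNIV" and sk: "(\<lambda>x. m x * (k x)\<^sup>2) summable_on UNIV" for h k
  proof -
    have sk': "(\<lambda>x. m x * (- k x)\<^sup>2) summable_on UNIV" using sk by simp
    have sd: "(\<lambda>x. m x * (h x - k x)\<^sup>2) summable_on UNIV"
      using weighted_sq_sum_add(1)[OF w sh sk'] by simp
    have "sqrt (normsq m (\<lambda>x. k x + (h x - k x))) \<le> sqrt (normsq m k) + sqrt (normsq m (\<lambda>x. h x - k x))"
      unfolding normsq_def
      by (rule sqrt_le_sqrt_add[OF infsum_nonneg infsum_nonneg]) (use weighted_sq_sum_add(2)[OF w sk sd] w in auto)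
    then show ?thesis by simp
  qed
  have "normsq m (\<lambda>x. g x - f x) = normsq m (\<lambda>x. f x - g x)"
    unfolding normsq_def by (simp add: power2_commute)
  then show ?thesis using triangle[OF sf sg] triangle[OF sg sf] by (simp add: abs_le_iff)
qed

lemma sqrt_Qmax_dist:
  assumes wg: "weighted_graph b c" and \<phi>: "fin_supp_in U \<phi>" and \<psi>: "fin_supp_in U \<psi>"
  shows "\<bar>sqrt (Qmax b c \<phi>) - sqrt (Qmax b c \<psi>)\<bar> \<le> sqrt (Qmax b c (\<lambda>x. \<phi> x - \<psi> x))"
proof -
  note W = weighted_graphD[OF wg]
  have triangle: "sqrt (Qmax b c f) \<le> sqrt (Qmax b c g) + sqrt (Qmax b c (\<lambda>x. f x - g x))"
    if f: "fin_supp_in U f" and g: "fin_supp_in U g" for f g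
  proof -
    have d: "fin_supp_in U (\<lambda>x. f x - g x)" by (rule fin_supp_in_diff[OF f g])
    show ?thesis
    proof (rule sqrt_le_sqrt_add[OF Qmax_nonneg[OF wg] Qmax_nonneg[OF wg]])
      fix l :: real assume l: "l > 0"
      have diff_split: "f y - f z = (g y - g z) + ((f y - g y) - (f z - g z))" for y z by simp
      have edges: "(\<Sum>\<^sub>\<infinity>p. b (fst p) (snd p) * (f (fst p) - f (snd p))\<^sup>2)
         \<le> (1 + l) * (\<Sum>\<^sub>\<infinity>p. b (fst p) (snd p) * (g (fst p) - g (snd p))\<^sup>2)
           + (1 + 1 / l) * (\<Sum>\<^sub>\<infinity>p. b (fst p) (snd p) * ((f (fst p) - g (fst p)) - (f (snd p) - g (snd p)))\<^sup>2)"
        unfolding diff_split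
        by (rule weighted_sq_sum_add(2)[OF _ edge_energy_summable[OF wg g] edge_energy_summable[OF wg d] l])
          (use W in auto)
      have killing: "(\<Sum>\<^sub>\<infinity>x. c x * (g x + (f x - g x))\<^sup>2)
         \<le> (1 + l) * (\<Sum>\<^sub>\<infinity>x. c x * (g x)\<^sup>2) + (1 + 1 / l) * (\<Sum>\<^sub>\<infinity>x. c x * (f x - g x)\<^sup>2)"
        by (rule weighted_sq_sum_add(2)[OF _ summable_fin_supp[OF g] summable_fin_supp[OF d] l]) (use W in auto)
      show "Qmax b c f \<le> (1 + l) * Qmax b c g + (1 + 1 / l) * Qmax b c (\<lambda>x. f x - g x)"
        using edges killing unfolding Qmax_def by (simp add: algebra_simps add_divide_distrib)
    qed
  qed
  have "Qmax b c (\<lambda>x. \<psi> x - \<phi> x) = Qmax b c (\<lambda>x. \<phi> x - \<psi> x)"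
    unfolding Qmax_def by (simp add: power2_commute algebra_simps)
  then show ?thesis using triangle[OF \<phi> \<psi>] triangle[OF \<psi> \<phi>] by (simp add: abs_le_iff)
qed

subsection \<open>Passing to the closure\<close>

lemma approx_seqD:
  assumes "approx_seq b c m U u \<phi>"
  shows "fin_supp_in U (\<phi> k)" "(\<lambda>k. normsq m (\<lambda>x. \<phi> k x - u x)) \<longlonglongrightarrow> 0"
    "\<epsilon> > 0 \<Longrightarrow> \<exists>N. \<forall>k\<ge>N. \<forall>l\<ge>N. Qmax b c (\<lambda>x. \<phi> k x - \<phi> l x) < \<epsilon>"
  using assms unfolding approx_seq_def by auto

text \<open>Along an approximating sequence sqrt Q is Cauchy, hence Q converges.\<close>
lemma approx_seq_Qmax_convergent:
  assumes wg: "weighted_graph b c" and ap: "approx_seq b c m U u \<phi>"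
  shows "convergent (\<lambda>k. Qmax b c (\<phi> k))"
proof -
  define q where "q k = sqrt (Qmax b c (\<phi> k))" for k
  have "Cauchy q"
  proof (rule CauchyI)
    fix e :: real assume e: "e > 0"
    then obtain N where N: "\<forall>k\<ge>N. \<forall>l\<ge>N. Qmax b c (\<lambda>x. \<phi> k x - \<phi> l x) < e\<^sup>2"
      using approx_seqD(3)[OF ap, of "e\<^sup>2"] by auto
    show "\<exists>M. \<forall>k\<ge>M. \<forall>l\<ge>M. norm (q k - q l) < e"
    proof (intro exI allI impI)
      fix k l assume "N \<le> k" "N \<le> l"
      then have "sqrt (Qmax b c (\<lambda>x. \<phi> k x - \<phi> l x)) < sqrt (e\<^sup>2)"
        using N by (intro real_sqrt_less_mono) auto
      then show "norm (q k - q l) < e"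
        using sqrt_Qmax_dist[OF wg approx_seqD(1)[OF ap, of k] approx_seqD(1)[OF ap, of l]] e
        unfolding q_def by simp
    qed
  qed
  then obtain L where "q \<longlonglongrightarrow> L" using Cauchy_convergent_iff convergent_def by blast
  then have "(\<lambda>k. (q k)\<^sup>2) \<longlonglongrightarrow> L\<^sup>2" by (intro tendsto_intros)
  moreover have "(q k)\<^sup>2 = Qmax b c (\<phi> k)" for k unfolding q_def using Qmax_nonneg[OF wg] by simp
  ultimately show ?thesis unfolding convergent_def by auto
qed

lemma approx_seq_normsq_tendsto:
  assumes m: "measure_on m" and ap: "approx_seq b c m U u \<phi>"
    and su: "(\<lambda>x. m x * (u x)\<^sup>2) summable_on UNIV"
  shows "(\<lambda>k. normsq m (\<phi> k)) \<longlonglongrightarrow> normsq m u"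
proof -
  have "(\<lambda>k. sqrt (normsq m (\<phi> k)) - sqrt (normsq m u)) \<longlonglongrightarrow> 0"
  proof (rule Lim_null_comparison)
    show "\<forall>\<^sub>F k in sequentially. norm (sqrt (normsq m (\<phi> k)) - sqrt (normsq m u))
        \<le> sqrt (normsq m (\<lambda>x. \<phi> k x - u x))"
      unfolding real_norm_def
      by (intro always_eventually allI sqrt_normsq_dist[OF m summable_fin_supp[OF approx_seqD(1)[OF ap]] su])
    show "(\<lambda>k. sqrt (normsq m (\<lambda>x. \<phi> k x - u x))) \<longlonglongrightarrow> 0"
      using tendsto_real_sqrt[OF approx_seqD(2)[OF ap]] by simp
  qed
  then have "(\<lambda>k. (sqrt (normsq m (\<phi> k)))\<^sup>2) \<longlonglongrightarrow> (sqrt (normsq m u))\<^sup>2"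
    by (intro tendsto_power) (rule LIM_zero_cancel)
  then show ?thesis by (simp add: normsq_nonneg[OF m])
qed

lemma tendsto_pointwise_of_normsq:
  assumes m: "measure_on m" and s: "\<And>k. (\<lambda>x. m x * (f k x)\<^sup>2) summable_on UNIV"
    and lim: "(\<lambda>k. normsq m (f k)) \<longlonglongrightarrow> 0"
  shows "(\<lambda>k. f k x) \<longlonglongrightarrow> 0"
proof (rule Lim_null_comparison)
  have mx: "m x > 0" and mnn: "\<And>y. m y \<ge> 0" using m unfolding measure_on_def by (auto intro: less_imp_le)
  have "m x * (f k x)\<^sup>2 \<le> normsq m (f k)" for k
    using finite_sum_le_infsum[OF s, of "{x}"] mnn unfolding normsq_def by simp
  then have "(f k x)\<^sup>2 \<le> normsq m (f k) / m x" for k using mx by (simp add: pos_le_divide_eq mult.commute)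
  then have "sqrt ((f k x)\<^sup>2) \<le> sqrt (normsq m (f k) / m x)" for k by (rule real_sqrt_le_mono)
  then show "\<forall>\<^sub>F k in sequentially. norm (f k x) \<le> sqrt (normsq m (f k) / m x)" by simp
  show "(\<lambda>k. sqrt (normsq m (f k) / m x)) \<longlonglongrightarrow> 0"
    using tendsto_real_sqrt[OF tendsto_divide[OF lim tendsto_const, of "m x"]] mx by simp
qed

text \<open>Lower semicontinuity of Q (Fatou): a pointwise limit of finitely supported functions
  whose energies are eventually at most epsilon has energy at most epsilon.\<close>
lemma Qmax_le_of_pointwise_limit:
  assumes wg: "weighted_graph b c" and \<psi>: "fin_supp_in U \<psi>" and \<phi>: "\<And>l. fin_supp_in U (\<phi> l)"
    and conv: "\<And>x. (\<lambda>l. \<phi> l x) \<longlonglongrightarrow> \<psi> x" and bound: "\<And>l. l \<ge> N \<Longrightarrow> Qmax b c (\<phi> l) \<le> \<epsilon>"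
  shows "Qmax b c \<psi> \<le> \<epsilon>"
proof -
  note W = weighted_graphD[OF wg]
  define P where "P f = (\<lambda>p. b (fst p) (snd p) * (f (fst p) - f (snd p))\<^sup>2)" for f :: "'a \<Rightarrow> real"
  define C where "C f = (\<lambda>x. c x * (f x)\<^sup>2)" for f :: "'a \<Rightarrow> real"
  define S where "S = {x. \<psi> x \<noteq> 0}"
  have fin: "finite S" and supp: "\<And>x. x \<notin> S \<Longrightarrow> \<psi> x = 0"
    using fin_supp_inD[OF \<psi>] unfolding S_def by auto
  have Q_split: "Qmax b c f = (\<Sum>\<^sub>\<infinity>p. P f p) / 2 + (\<Sum>\<^sub>\<infinity>x. C f x)" for f
    unfolding Qmax_def P_def C_def ..
  text \<open>Finite partial sums of the energy pass to the limit.\<close>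
  have partial: "sum (P \<psi>) F / 2 + sum (C \<psi>) S \<le> \<epsilon>" if F: "finite F" for F
  proof -
    have lim: "(\<lambda>l. sum (P (\<phi> l)) F / 2 + sum (C (\<phi> l)) S) \<longlonglongrightarrow> sum (P \<psi>) F / 2 + sum (C \<psi>) S"
      unfolding P_def C_def by (intro tendsto_intros conv) simp
    have "sum (P (\<phi> l)) F / 2 + sum (C (\<phi> l)) S \<le> \<epsilon>" if l: "l \<ge> N" for l
    proof -
      have "sum (P (\<phi> l)) F \<le> (\<Sum>\<^sub>\<infinity>p. P (\<phi> l) p)"
        unfolding P_def by (rule finite_sum_le_infsum[OF edge_energy_summable[OF wg \<phi>] F]) (use W in auto)
      moreover have "sum (C (\<phi> l)) S \<le> (\<Sum>\<^sub>\<infinity>x. C (\<phi> l) x)"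
        unfolding C_def by (rule finite_sum_le_infsum[OF summable_fin_supp[OF \<phi>] fin]) (use W in auto)
      ultimately show ?thesis using bound[OF l] unfolding Q_split by linarith
    qed
    then show ?thesis by (intro LIMSEQ_le_const2[OF lim]) auto
  qed
  have "(\<Sum>\<^sub>\<infinity>p. P \<psi> p) \<le> 2 * (\<epsilon> - sum (C \<psi>) S)"
  proof (rule infsum_le_finite_sums)
    show "P \<psi> summable_on UNIV" unfolding P_def by (rule edge_energy_summable[OF wg \<psi>])
    show "sum (P \<psi>) F \<le> 2 * (\<epsilon> - sum (C \<psi>) S)" if "finite F" for F
      using partial[OF that] by simp
  qed
  moreover have "(\<Sum>\<^sub>\<infinity>x. C \<psi> x) = sum (C \<psi>) S"
    unfolding C_def by (rule infsumI[OF has_sum_finite_support[OF fin supp]])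
  ultimately show ?thesis unfolding Q_split by simp
qed

lemma approx_seq_zero_Qmax:
  assumes wg: "weighted_graph b c" and m: "measure_on m" and ap: "approx_seq b c m U u \<phi>"
    and u0: "\<And>x. u x = 0"
  shows "(\<lambda>k. Qmax b c (\<phi> k)) \<longlonglongrightarrow> 0"
proof (rule LIMSEQ_I)
  note \<phi> = approx_seqD(1)[OF ap]
  have pw: "(\<lambda>l. \<phi> l x) \<longlonglongrightarrow> 0" for x
    by (rule tendsto_pointwise_of_normsq[OF m summable_fin_supp[OF \<phi>]]) (use approx_seqD(2)[OF ap] u0 in simp)
  fix r :: real assume r: "r > 0"
  then obtain N where N: "\<forall>k\<ge>N. \<forall>l\<ge>N. Qmax b c (\<lambda>x. \<phi> k x - \<phi> l x) < r / 2"
    using approx_seqD(3)[OF ap, of "r / 2"] by auto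
  have "Qmax b c (\<phi> k) \<le> r / 2" if k: "k \<ge> N" for k
  proof (rule Qmax_le_of_pointwise_limit[OF wg \<phi> fin_supp_in_diff[OF \<phi> \<phi>]])
    show "(\<lambda>l. \<phi> k x - \<phi> l x) \<longlonglongrightarrow> \<phi> k x" for x using tendsto_diff[OF tendsto_const pw] by simp
    show "Qmax b c (\<lambda>x. \<phi> k x - \<phi> l x) \<le> r / 2" if "l \<ge> N" for l using N k that by (simp add: less_imp_le)
  qed
  then show "\<exists>N. \<forall>k\<ge>N. norm (Qmax b c (\<phi> k) - 0) < r" using Qmax_nonneg[OF wg] r by fastforce
qed

lemma QU_dom_approx:
  assumes wg: "weighted_graph b c" and m: "measure_on m" and u: "u \<in> QU_dom b c m U"
  obtains \<phi> where "approx_seq b c m U u \<phi>" "(\<lambda>k. Qmax b c (\<phi> k)) \<longlonglongrightarrow> QU b c m U u"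
    "(\<lambda>k. normsq m (\<phi> k)) \<longlonglongrightarrow> normsq m u"
proof
  define \<phi> where "\<phi> = (SOME \<phi>. approx_seq b c m U u \<phi>)"
  obtain \<psi> where "approx_seq b c m U u \<psi>" using u unfolding QU_dom_def by blast
  then show ap: "approx_seq b c m U u \<phi>"
    unfolding \<phi>_def by (rule someI[where P="approx_seq b c m U u"])
  show "(\<lambda>k. Qmax b c (\<phi> k)) \<longlonglongrightarrow> QU b c m U u"
    using approx_seq_Qmax_convergent[OF wg ap] unfolding QU_def \<phi>_def[symmetric]
    by (simp add: convergent_LIMSEQ_iff)
  show "(\<lambda>k. normsq m (\<phi> k)) \<longlonglongrightarrow> normsq m u"
    using approx_seq_normsq_tendsto[OF m ap] u by (auto simp: QU_dom_def)
qed

lemma QU_lower_bound: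
  assumes wg: "weighted_graph b c" and m: "measure_on m" and u: "u \<in> QU_dom b c m U"
    and H: "\<And>\<phi>. fin_supp_in U \<phi> \<Longrightarrow> K * normsq m \<phi> \<le> Qmax b c \<phi>"
  shows "K * normsq m u \<le> QU b c m U u"
proof -
  obtain \<phi> where ap: "approx_seq b c m U u \<phi>" and Q: "(\<lambda>k. Qmax b c (\<phi> k)) \<longlonglongrightarrow> QU b c m U u"
    and N: "(\<lambda>k. normsq m (\<phi> k)) \<longlonglongrightarrow> normsq m u" using QU_dom_approx[OF wg m u] .
  show ?thesis by (rule LIMSEQ_le[OF tendsto_mult_left[OF N] Q]) (use H approx_seqD(1)[OF ap] in blast)
qed

lemma QU_upper_bound:
  assumes wg: "weighted_graph b c" and m: "measure_on m" and u: "u \<in> QU_dom b c m U"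
    and H: "\<And>\<phi>. fin_supp_in U \<phi> \<Longrightarrow> Qmax b c \<phi> \<le> K * normsq m \<phi>"
  shows "QU b c m U u \<le> K * normsq m u"
proof -
  obtain \<phi> where ap: "approx_seq b c m U u \<phi>" and Q: "(\<lambda>k. Qmax b c (\<phi> k)) \<longlonglongrightarrow> QU b c m U u"
    and N: "(\<lambda>k. normsq m (\<phi> k)) \<longlonglongrightarrow> normsq m u" using QU_dom_approx[OF wg m u] .
  show ?thesis by (rule LIMSEQ_le[OF Q tendsto_mult_left[OF N]]) (use H approx_seqD(1)[OF ap] in blast)
qed

lemma QU_eq_zero:
  assumes wg: "weighted_graph b c" and m: "measure_on m" and u: "u \<in> QU_dom b c m U"
    and n0: "normsq m u = 0"
  shows "QU b c m U u = 0"
proof -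
  obtain \<phi> where ap: "approx_seq b c m U u \<phi>" and Q: "(\<lambda>k. Qmax b c (\<phi> k)) \<longlonglongrightarrow> QU b c m U u"
    using QU_dom_approx[OF wg m u] .
  have "(\<lambda>k. u x) \<longlonglongrightarrow> 0" for x
    by (rule tendsto_pointwise_of_normsq[OF m]) (use n0 u in \<open>auto simp: QU_dom_def\<close>)
  then have "u x = 0" for x by (simp add: LIMSEQ_const_iff)
  then have "(\<lambda>k. Qmax b c (\<phi> k)) \<longlonglongrightarrow> 0" by (rule approx_seq_zero_Qmax[OF wg m ap])
  then show ?thesis using Q LIMSEQ_unique by blast
qed

lemma SUP_ereal_bdd_above:
  assumes "A \<noteq> {}" "bdd_above (f ` A)"
  shows "(SUP x\<in>A. ereal (f x)) = ereal (Sup (f ` A))"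
proof -
  obtain x0 where x0: "x0 \<in> A" using assms(1) by auto
  have "(SUP x\<in>A. ereal (f x)) \<le> ereal (Sup (f ` A))"
    using assms(2) by (auto intro!: SUP_least cSup_upper)
  moreover have "ereal (f x0) \<le> (SUP x\<in>A. ereal (f x))" using x0 by (rule SUP_upper)
  ultimately have "\<bar>SUP x\<in>A. ereal (f x)\<bar> \<noteq> \<infinity>" by auto
  then show ?thesis using ereal_SUP by metis
qed

lemma SUP_ereal_unbounded:
  assumes "\<not> bdd_above (f ` A)"
  shows "(SUP x\<in>A. ereal (f x)) = \<infinity>"
proof (rule ccontr)
  assume "(SUP x\<in>A. ereal (f x)) \<noteq> \<infinity>"
  moreover have "ereal (f x) \<le> (SUP x\<in>A. ereal (f x))" if "x \<in> A" for x using that by (rule SUP_upper)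
  ultimately obtain r where "\<And>x. x \<in> A \<Longrightarrow> f x \<le> r"
    by (cases "SUP x\<in>A. ereal (f x)") (fastforce+)
  then have "bdd_above (f ` A)" by (rule bdd_aboveI2)
  then show False using assms by contradiction
qed

text \<open>The upper bound of the first pair, read in the extended reals: when D_U = \<infinity> it is
  trivial unless \<parallel>u\<parallel>_m = 0, and then Q_U(u) = 0 by closability.\<close>
lemma QU_upper_bound_ereal:
  assumes wg: "weighted_graph b c" and npos: "\<forall>x. nmeas b c x > 0" and m: "measure_on m"
    and U: "U \<noteq> {}" and u: "u \<in> QU_dom b c m U"
  defines "s \<equiv> sqrt (1 - (alpha b c (nmeas b c) U)\<^sup>2)"
  shows "ereal (QU b c m U u) \<le> (SUP x\<in>U. ereal (deg b c m x)) * ereal ((1 + s) * normsq m u)"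
proof (cases "bdd_above (deg b c m ` U)")
  case True
  have "QU b c m U u \<le> (Sup (deg b c m ` U) * (1 + s)) * normsq m u"
    using finite_support_bounds_n(2)[OF wg npos m U _ True]
    by (intro QU_upper_bound[OF wg m u]) (simp add: s_def mult.assoc)
  then show ?thesis by (simp add: SUP_ereal_bdd_above[OF U True] mult.assoc)
next
  case False
  have "(alpha b c (nmeas b c) U)\<^sup>2 \<le> 1"
    using alpha_nmeas_le_one[OF wg npos U] by (intro power_le_one) auto
  then have s: "s \<ge> 0" unfolding s_def by simp
  show ?thesis
  proof (cases "normsq m u = 0")
    case True
    then show ?thesis using QU_eq_zero[OF wg m u] by (simp add: zero_ereal_def[symmetric])
  next
    case False
    then have "(1 + s) * normsq m u > 0" using normsq_nonneg[OF m, of u] s by simp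
    moreover have "\<infinity> * ereal r = \<infinity>" if "r > 0" for r using that by simp
    ultimately have "\<infinity> * ereal ((1 + s) * normsq m u) = \<infinity>" by blast
    then show ?thesis using SUP_ereal_unbounded[OF \<open>\<not> bdd_above (deg b c m ` U)\<close>] by simp
  qed
qed

theorem mainTheorem8:
  fixes b :: "'v::countable \<Rightarrow> 'v \<Rightarrow> real" and c m :: "'v \<Rightarrow> real" and U :: "'v set"
  assumes "infinite (UNIV :: 'v set)"
    and "weighted_graph b c"
    and "\<forall>x. nmeas b c x > 0"
    and "measure_on m"
    and "U \<noteq> {}"
  shows "(\<forall>u \<in> QU_dom b c m U.
            Inf (deg b c m ` U) * (1 - sqrt (1 - (alpha b c (nmeas b c) U)\<^sup>2)) * normsq m u
              \<le> QU b c m U u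
          \<and> ereal (QU b c m U u)
              \<le> (SUP x\<in>U. ereal (deg b c m x))
                 * ereal ((1 + sqrt (1 - (alpha b c (nmeas b c) U)\<^sup>2)) * normsq m u))
       \<and> (bdd_above (deg b c m ` U) \<longrightarrow>
          (\<forall>u \<in> QU_dom b c m U.
            (Sup (deg b c m ` U) - sqrt ((Sup (deg b c m ` U))\<^sup>2 - (alpha b c m U)\<^sup>2)) * normsq m u
              \<le> QU b c m U u
          \<and> QU b c m U u
              \<le> (Sup (deg b c m ` U) + sqrt ((Sup (deg b c m ` U))\<^sup>2 - (alpha b c m U)\<^sup>2)) * normsq m u))"
proof (intro conjI ballI impI)
  note wg = assms(2) and npos = assms(3) and m = assms(4) and U = assms(5)
  fix u assume u: "u \<in> QU_dom b c m U"
  show "Inf (deg b c m ` U) * (1 - sqrt (1 - (alpha b c (nmeas b c) U)\<^sup>2)) * normsq m u \<le> QU b c m U u"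
    by (rule QU_lower_bound[OF wg m u finite_support_bounds_n(1)[OF wg npos m U]])
  show "ereal (QU b c m U u) \<le> (SUP x\<in>U. ereal (deg b c m x))
      * ereal ((1 + sqrt (1 - (alpha b c (nmeas b c) U)\<^sup>2)) * normsq m u)"
    by (rule QU_upper_bound_ereal[OF wg npos m U u])
next
  note wg = assms(2) and npos = assms(3) and m = assms(4)
  fix u assume bdd: "bdd_above (deg b c m ` U)" and u: "u \<in> QU_dom b c m U"
  note bounds = finite_support_bounds_m[OF wg npos m _ bdd]
  show "(Sup (deg b c m ` U) - sqrt ((Sup (deg b c m ` U))\<^sup>2 - (alpha b c m U)\<^sup>2)) * normsq m u \<le> QU b c m U u"
    by (rule QU_lower_bound[OF wg m u bounds(1)])
  show "QU b c m U u \<le> (Sup (deg b c m ` U) + sqrt ((Sup (deg b c m ` U))\<^sup>2 - (alpha b c m U)\<^sup>2)) * normsq m u"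
    by (rule QU_upper_bound[OF wg m u bounds(2)])
qed

end
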